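(* Let $\mathfrak g$ be a finite-dimensional complex simple Lie algebra with invariant form $\langle\cdot,\cdot\rangle$, let $s,x\in\mathfrak g$ with $s$ semisimple, $x$ nilpotent and $[s,x]=0$, and write $\mathfrak g=\bigoplus_r\mathfrak g_r$ for the eigenspace decomposition of $\mathrm{ad}_s$. Let $\hat{\mathfrak g}_{g}$ be the Lie algebra with basis-linear generators $a^g_m$ ($a\in\mathfrak g_r$, $m\in r+\mathbb Z$, linear in $a$) and a central element $K$, with bracket $$[a^g_m,b^g_n]=[a,b]^g_{m+n}+\delta_{m,-n}\,\langle [x,a]+m a,\,b\rangle\,K\qquad(a\in\mathfrak g_{r_a},\ b\in\mathfrak g_{r_b}),$$ and let $\hat{\mathfrak g}=\mathfrak g\otimes\mathbb C[t,t^{-1}]\oplus\mathbb CK$ with $[a_m,b_n]=[a,b]_{m+n}+m\delta_{m,-n}\langle a,b\rangle K$ (where $a_m=a\otimes t^m$). Define $\eta(a)=\langle s+x,a\rangle K$. Then the linear map $$f:\hat{\mathfrak g}_g\to\hat{\mathfrak g},\qquad f(a^g_m)=a_{m-r}-\delta_{m,r}\,\eta(a)\quad(a\in\mathfrak g_r,\ m\in r+\mathbb Z),\qquad f(K)=K,$$ is an isomorphism of Lie algebras.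
   Context: $\hat{\mathfrak g}_g$ is the $g$-twisted mode algebra of the affine vertex algebra for the inner automorphism $g=e^{-2\pi i(s+x)}$ (acting via $\mathrm{ad}$). Here $[a,b]\in\mathfrak g_{r_a+r_b}$, so $[a,b]^g_{m+n}$ is a well-defined generator. *)

theory Defs
  imports Main Complex_Main
begin

definition lie_algebra :: "(complex \<Rightarrow> 'g::ab_group_add \<Rightarrow> 'g) \<Rightarrow> ('g \<Rightarrow> 'g \<Rightarrow> 'g) \<Rightarrow> bool" where
  "lie_algebra sc br \<longleftrightarrow> vector_space sc
     \<and> (\<forall>a. Vector_Spaces.linear sc sc (br a))
     \<and> (\<forall>b. Vector_Spaces.linear sc sc (\<lambda>a. br a b))
     \<and> (\<forall>a. br a a = 0)
     \<and> (\<forall>a b c. br a (br b c) + br b (br c a) + br c (br a b) = 0)"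

definition finite_dim :: "(complex \<Rightarrow> 'g::ab_group_add \<Rightarrow> 'g) \<Rightarrow> bool" where
  "finite_dim sc \<longleftrightarrow> (\<exists>S. finite S \<and> module.span sc S = UNIV)"

definition lie_ideal :: "(complex \<Rightarrow> 'g::ab_group_add \<Rightarrow> 'g) \<Rightarrow> ('g \<Rightarrow> 'g \<Rightarrow> 'g) \<Rightarrow> 'g set \<Rightarrow> bool" where
  "lie_ideal sc br I \<longleftrightarrow> module.subspace sc I \<and> (\<forall>a b. b \<in> I \<longrightarrow> br a b \<in> I)"

definition simple_lie_algebra :: "(complex \<Rightarrow> 'g::ab_group_add \<Rightarrow> 'g) \<Rightarrow> ('g \<Rightarrow> 'g \<Rightarrow> 'g) \<Rightarrow> bool" where
  "simple_lie_algebra sc br \<longleftrightarrow> lie_algebra sc br \<and> finite_dim sc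
     \<and> (\<exists>a b. br a b \<noteq> 0)
     \<and> (\<forall>I. lie_ideal sc br I \<longrightarrow> I = {0} \<or> I = UNIV)"

definition invariant_form :: "(complex \<Rightarrow> 'g::ab_group_add \<Rightarrow> 'g) \<Rightarrow> ('g \<Rightarrow> 'g \<Rightarrow> 'g) \<Rightarrow> ('g \<Rightarrow> 'g \<Rightarrow> complex) \<Rightarrow> bool" where
  "invariant_form sc br B \<longleftrightarrow>
     (\<forall>a. Vector_Spaces.linear sc (*) (B a))
     \<and> (\<forall>a b. B a b = B b a)
     \<and> (\<forall>a b c. B (br a b) c = B a (br b c))
     \<and> (\<forall>a. (\<forall>b. B a b = 0) \<longrightarrow> a = 0)"

definition eigsp :: "(complex \<Rightarrow> 'g::ab_group_add \<Rightarrow> 'g) \<Rightarrow> ('g \<Rightarrow> 'g \<Rightarrow> 'g) \<Rightarrow> 'g \<Rightarrow> complex \<Rightarrow> 'g set" where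
  "eigsp sc br s r = {a. br s a = sc r a}"

definition ad_semisimple :: "(complex \<Rightarrow> 'g::ab_group_add \<Rightarrow> 'g) \<Rightarrow> ('g \<Rightarrow> 'g \<Rightarrow> 'g) \<Rightarrow> 'g \<Rightarrow> bool" where
  "ad_semisimple sc br s \<longleftrightarrow> module.span sc (\<Union>r. eigsp sc br s r) = UNIV"

definition ad_nilpotent :: "('g::ab_group_add \<Rightarrow> 'g \<Rightarrow> 'g) \<Rightarrow> 'g \<Rightarrow> bool" where
  "ad_nilpotent br x \<longleftrightarrow> (\<exists>N. ((br x) ^^ N) = (\<lambda>_. 0))"

text \<open>An element is a pair (phi, c) with phi :: int => g finitely supported (phi n is the
coefficient of t^n) and c the coefficient of K.\<close>

definition supp1 :: "(int \<Rightarrow> 'g::zero) \<Rightarrow> int set" where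
  "supp1 \<phi> = {n. \<phi> n \<noteq> 0}"

definition loop_carrier :: "((int \<Rightarrow> 'g::zero) \<times> complex) set" where
  "loop_carrier = {P. finite (supp1 (fst P))}"

definition loop_add :: "((int \<Rightarrow> 'g::ab_group_add) \<times> complex) \<Rightarrow> ((int \<Rightarrow> 'g) \<times> complex) \<Rightarrow> ((int \<Rightarrow> 'g) \<times> complex)" where
  "loop_add P Q = ((\<lambda>n. fst P n + fst Q n), snd P + snd Q)"

definition loop_scale :: "(complex \<Rightarrow> 'g::ab_group_add \<Rightarrow> 'g) \<Rightarrow> complex \<Rightarrow> ((int \<Rightarrow> 'g) \<times> complex) \<Rightarrow> ((int \<Rightarrow> 'g) \<times> complex)" where
  "loop_scale sc z P = ((\<lambda>n. sc z (fst P n)), z * snd P)"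

text \<open>[a_m, b_n] = [a,b]_{m+n} + m delta_{m,-n} <a,b> K, extended bilinearly; K central.\<close>
definition loop_br :: "('g::ab_group_add \<Rightarrow> 'g \<Rightarrow> 'g) \<Rightarrow> ('g \<Rightarrow> 'g \<Rightarrow> complex) \<Rightarrow>
    ((int \<Rightarrow> 'g) \<times> complex) \<Rightarrow> ((int \<Rightarrow> 'g) \<times> complex) \<Rightarrow> ((int \<Rightarrow> 'g) \<times> complex)" where
  "loop_br br B P Q =
    ((\<lambda>k. \<Sum>(m, n) \<in> {(m, n). m \<in> supp1 (fst P) \<and> n \<in> supp1 (fst Q) \<and> m + n = k}.
            br (fst P m) (fst Q n)),
     (\<Sum>m \<in> supp1 (fst P). of_int m * B (fst P m) (fst Q (- m))))"

text \<open>An element is a pair (Phi, c): Phi r m is the component a with a in g_r and mode m in r + Z,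
i.e. it stands for the generator a^g_m; Phi is finitely supported; c is the coefficient of K.\<close>

definition supp2 :: "(complex \<Rightarrow> complex \<Rightarrow> 'g::zero) \<Rightarrow> (complex \<times> complex) set" where
  "supp2 \<Phi> = {(r, m). \<Phi> r m \<noteq> 0}"

definition tw_carrier :: "(complex \<Rightarrow> 'g::ab_group_add \<Rightarrow> 'g) \<Rightarrow> ('g \<Rightarrow> 'g \<Rightarrow> 'g) \<Rightarrow> 'g \<Rightarrow>
    ((complex \<Rightarrow> complex \<Rightarrow> 'g) \<times> complex) set" where
  "tw_carrier sc br s = {P. finite (supp2 (fst P))
       \<and> (\<forall>r m. fst P r m \<in> eigsp sc br s r)
       \<and> (\<forall>r m. fst P r m \<noteq> 0 \<longrightarrow> m - r \<in> \<int>)}"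

definition tw_add :: "((complex \<Rightarrow> complex \<Rightarrow> 'g::ab_group_add) \<times> complex) \<Rightarrow>
    ((complex \<Rightarrow> complex \<Rightarrow> 'g) \<times> complex) \<Rightarrow> ((complex \<Rightarrow> complex \<Rightarrow> 'g) \<times> complex)" where
  "tw_add P Q = ((\<lambda>r m. fst P r m + fst Q r m), snd P + snd Q)"

definition tw_scale :: "(complex \<Rightarrow> 'g::ab_group_add \<Rightarrow> 'g) \<Rightarrow> complex \<Rightarrow>
    ((complex \<Rightarrow> complex \<Rightarrow> 'g) \<times> complex) \<Rightarrow> ((complex \<Rightarrow> complex \<Rightarrow> 'g) \<times> complex)" where
  "tw_scale sc z P = ((\<lambda>r m. sc z (fst P r m)), z * snd P)"

text \<open>[a^g_m, b^g_n] = [a,b]^g_{m+n} + delta_{m,-n} <[x,a] + m a, b> K, with [a,b] in g_{r_a+r_b};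
extended bilinearly; K central.\<close>
definition tw_br :: "(complex \<Rightarrow> 'g::ab_group_add \<Rightarrow> 'g) \<Rightarrow> ('g \<Rightarrow> 'g \<Rightarrow> 'g) \<Rightarrow> ('g \<Rightarrow> 'g \<Rightarrow> complex) \<Rightarrow> 'g \<Rightarrow>
    ((complex \<Rightarrow> complex \<Rightarrow> 'g) \<times> complex) \<Rightarrow> ((complex \<Rightarrow> complex \<Rightarrow> 'g) \<times> complex) \<Rightarrow>
    ((complex \<Rightarrow> complex \<Rightarrow> 'g) \<times> complex)" where
  "tw_br sc br B x P Q =
    ((\<lambda>r2 k. \<Sum>((r, m), (r', n)) \<in> {((r, m), (r', n)). (r, m) \<in> supp2 (fst P) \<and> (r', n) \<in> supp2 (fst Q)
                                          \<and> r + r' = r2 \<and> m + n = k}.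
            br (fst P r m) (fst Q r' n)),
     (\<Sum>((r, m), (r', n)) \<in> {((r, m), (r', n)). (r, m) \<in> supp2 (fst P) \<and> (r', n) \<in> supp2 (fst Q)
                                          \<and> m = - n}.
            B (br x (fst P r m) + sc m (fst P r m)) (fst Q r' n)))"

text \<open>The map f: a^g_m |-> a_{m-r} - delta_{m,r} eta(a), K |-> K, with eta(a) = <s+x,a> K,
extended linearly.\<close>
definition f_map :: "('g::ab_group_add \<Rightarrow> 'g \<Rightarrow> complex) \<Rightarrow> 'g \<Rightarrow> 'g \<Rightarrow>
    ((complex \<Rightarrow> complex \<Rightarrow> 'g) \<times> complex) \<Rightarrow> ((int \<Rightarrow> 'g) \<times> complex)" where
  "f_map B s x P =
    ((\<lambda>n. \<Sum>(r, m) \<in> {(r, m). (r, m) \<in> supp2 (fst P) \<and> m - r = of_int n}. fst P r m),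
     snd P - (\<Sum>(r, m) \<in> {(r, m). (r, m) \<in> supp2 (fst P) \<and> m = r}. B (s + x) (fst P r m)))"

definition lie_iso :: "(complex \<Rightarrow> 'g::ab_group_add \<Rightarrow> 'g) \<Rightarrow> ('g \<Rightarrow> 'g \<Rightarrow> 'g) \<Rightarrow> ('g \<Rightarrow> 'g \<Rightarrow> complex) \<Rightarrow> 'g \<Rightarrow> 'g \<Rightarrow>
    (((complex \<Rightarrow> complex \<Rightarrow> 'g) \<times> complex) \<Rightarrow> ((int \<Rightarrow> 'g) \<times> complex)) \<Rightarrow> bool" where
  "lie_iso sc br B s x f \<longleftrightarrow>
     bij_betw f (tw_carrier sc br s) loop_carrier
     \<and> (\<forall>P \<in> tw_carrier sc br s. \<forall>Q \<in> tw_carrier sc br s. f (tw_add P Q) = loop_add (f P) (f Q))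
     \<and> (\<forall>z. \<forall>P \<in> tw_carrier sc br s. f (tw_scale sc z P) = loop_scale sc z (f P))
     \<and> (\<forall>P \<in> tw_carrier sc br s. \<forall>Q \<in> tw_carrier sc br s.
          f (tw_br sc br B x P Q) = loop_br br B (f P) (f Q))"

end

theory Submission
  imports Defs "HOL-Library.Product_Plus"
begin

text \<open>
  The map \<open>f\<close> relabels the twisted mode \<open>a\<^sup>g\<^sub>m\<close> (\<open>a \<in> g\<^sub>r\<close>) as the loop mode \<open>a\<^sub>m\<^sub>-\<^sub>r\<close>.
  Because \<open>ad s\<close> is diagonalizable and its eigenspaces are independent, every loop mode
  \<open>v\<^sub>n\<close> splits uniquely into pieces \<open>(v\<^sub>r)\<^sub>n\<close> coming from the generators \<open>(v\<^sub>r)\<^sup>g\<^sub>r\<^sub>+\<^sub>n\<close>,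
  so \<open>f\<close> is a linear bijection, whatever the central shift by \<open>\<eta>\<close>.

  On brackets the non-central parts agree since \<open>(m - r) + (n - r') = (m + n) - (r + r')\<close>.
  For the central parts, invariance of the form and \<open>[s, x] = 0\<close> give
  \<open>\<langle>s + x, [a, b]\<rangle> = r\<langle>a, b\<rangle> + \<langle>[x, a], b\<rangle>\<close>, and the form pairs \<open>g\<^sub>r\<close> only with \<open>g\<^sub>-\<^sub>r\<close>;
  hence subtracting \<open>\<eta>([a, b])\<close> from the twisted cocycle \<open>\<langle>[x, a] + m a, b\<rangle>\<close> leaves
  exactly \<open>(m - r)\<langle>a, b\<rangle>\<close>, the loop cocycle of \<open>a\<^sub>m\<^sub>-\<^sub>r\<close> and \<open>b\<^sub>n\<^sub>-\<^sub>r\<^sub>'\<close>.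
  In coordinates both brackets are double sums over pairs of support points, which are
  compared after regrouping them along the fibres of the relevant index maps.
\<close>

section \<open>Regrouping finite sums\<close>

lemma sum_fibres:
  assumes "finite U" "finite S"
    and fibre: "\<And>z. \<Phi> z = (\<Sum>p\<in>{p\<in>U. g p = z}. F p)"
    and vanish: "\<And>z. z \<notin> S \<Longrightarrow> \<Phi> z = 0"
  shows "(\<Sum>z\<in>{z\<in>S. C z}. \<Phi> z) = (\<Sum>p\<in>{p\<in>U. C (g p)}. F p)"
proof -
  let ?T = "{z \<in> S \<union> g ` U. C z}"
  have "(\<Sum>z\<in>{z\<in>S. C z}. \<Phi> z) = (\<Sum>z\<in>?T. \<Phi> z)"
    by (rule sum.mono_neutral_left) (use assms(1,2) vanish in auto)
  also have "\<dots> = (\<Sum>z\<in>?T. \<Sum>p\<in>{p\<in>{p\<in>U. C (g p)}. g p = z}. F p)"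
  proof (rule sum.cong)
    fix z assume "z \<in> ?T"
    then have "{p\<in>{p\<in>U. C (g p)}. g p = z} = {p\<in>U. g p = z}" by auto
    then show "\<Phi> z = (\<Sum>p\<in>{p\<in>{p\<in>U. C (g p)}. g p = z}. F p)"
      by (simp add: fibre)
  qed simp
  also have "\<dots> = (\<Sum>p\<in>{p\<in>U. C (g p)}. F p)"
    by (rule sum.group) (use assms in auto)
  finally show ?thesis .
qed

lemma finite_fibre_sum_support:
  assumes "finite U" and "\<And>z. \<Phi> z = (\<Sum>p\<in>{p\<in>U. g p = z}. F p)"
  shows "finite {z. \<Phi> z \<noteq> 0}"
proof (rule finite_subset)
  show "{z. \<Phi> z \<noteq> 0} \<subseteq> g ` U"
    using assms(2) by (fastforce intro: sum.neutral)
qed (use assms in simp)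

lemma sum_diagonal:
  fixes \<Phi> :: "complex \<Rightarrow> complex \<Rightarrow> 'g::zero" and G :: "'g \<Rightarrow> 'b::comm_monoid_add"
  assumes "finite E" "fst ` supp2 \<Phi> \<subseteq> E" "G 0 = 0"
  shows "(\<Sum>(r, m) \<in> {(r, m). (r, m) \<in> supp2 \<Phi> \<and> m - r = d}. G (\<Phi> r m)) = (\<Sum>r\<in>E. G (\<Phi> r (r + d)))"
proof -
  let ?A = "{(r, m). (r, m) \<in> supp2 \<Phi> \<and> m - r = d}"
  have "(\<Sum>(r, m) \<in> ?A. G (\<Phi> r m)) = (\<Sum>p \<in> ?A. G (\<Phi> (fst p) (fst p + d)))"
    by (rule sum.cong) (auto simp: algebra_simps)
  also have "\<dots> = (\<Sum>r \<in> fst ` ?A. G (\<Phi> r (r + d)))"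
    by (subst sum.reindex) (auto simp: inj_on_def)
  also have "\<dots> = (\<Sum>r\<in>E. G (\<Phi> r (r + d)))"
  proof (rule sum.mono_neutral_left)
    show "\<forall>r\<in>E - fst ` ?A. G (\<Phi> r (r + d)) = 0"
    proof
      fix r assume "r \<in> E - fst ` ?A"
      then have "(r, r + d) \<notin> supp2 \<Phi>" by force
      then show "G (\<Phi> r (r + d)) = 0" using assms(3) by (simp add: supp2_def)
    qed
  qed (use assms in auto)
  finally show ?thesis .
qed

section \<open>Coordinates on the twisted and untwisted algebras\<close>

lemma f_map_fst_diagonal:
  assumes "finite E" "fst ` supp2 (fst P) \<subseteq> E"
  shows "fst (f_map B s x P) n = (\<Sum>r\<in>E. fst P r (r + of_int n))"
  using sum_diagonal[where G = "\<lambda>v. v" and d = "of_int n", OF assms] by (simp add: f_map_def)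

lemma f_map_snd_diagonal:
  assumes "finite E" "fst ` supp2 (fst P) \<subseteq> E" "B (s + x) 0 = 0"
  shows "snd (f_map B s x P) = snd P - (\<Sum>r\<in>E. B (s + x) (fst P r r))"
proof -
  have "{(r, m). (r, m) \<in> supp2 (fst P) \<and> m = r} = {(r, m). (r, m) \<in> supp2 (fst P) \<and> m - r = 0}"
    by auto
  then show ?thesis
    using sum_diagonal[where G = "B (s + x)" and d = 0, OF assms] by (simp add: f_map_def)
qed

lemma tw_carrierD:
  assumes "P \<in> tw_carrier sc br s"
  shows "finite (supp2 (fst P))" "fst P r m \<in> eigsp sc br s r" "fst P r m \<noteq> 0 \<Longrightarrow> m - r \<in> \<int>"
  using assms by (auto simp: tw_carrier_def)

lemma complex_Ints_eq_floor_Re: "z \<in> \<int> \<Longrightarrow> z = of_int \<lfloor>Re z\<rfloor>"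
  by (auto elim: Ints_cases)

text \<open>The loop index \<open>m - r\<close> of \<open>f(a\<^sup>g\<^sub>m)\<close>, for \<open>a \<in> g\<^sub>r\<close>, read off the support point \<open>(r, m)\<close>.\<close>
definition mode_shift :: "complex \<times> complex \<Rightarrow> int" where
  "mode_shift u = \<lfloor>Re (snd u - fst u)\<rfloor>"

lemma mode_shift_eq:
  assumes "P \<in> tw_carrier sc br s" "u \<in> supp2 (fst P)"
  shows "snd u - fst u = of_int (mode_shift u)"
  unfolding mode_shift_def
  by (rule complex_Ints_eq_floor_Re)
    (use tw_carrierD(3)[OF assms(1), of "fst u" "snd u"] assms(2) in \<open>auto simp: supp2_def\<close>)

lemma f_map_fst_fibres:
  assumes "P \<in> tw_carrier sc br s"
  shows "fst (f_map B s x P) n = (\<Sum>u\<in>{u\<in>supp2 (fst P). mode_shift u = n}. case_prod (fst P) u)"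
  unfolding f_map_def fst_conv
proof (rule sum.cong)
  show "{(r, m). (r, m) \<in> supp2 (fst P) \<and> m - r = of_int n} = {u \<in> supp2 (fst P). mode_shift u = n}"
    using mode_shift_eq[OF assms] by fastforce
qed auto

lemma bilinear_f_map_fst_fibres:
  assumes h: "\<And>b. module_hom sc sc' (\<lambda>a. h a b)" "\<And>a. module_hom sc sc' (h a)"
    and P: "P \<in> tw_carrier sc br s" and Q: "Q \<in> tw_carrier sc br s"
  shows "h (fst (f_map B s x P) a) (fst (f_map B s x Q) b) =
    (\<Sum>p\<in>{p\<in>supp2 (fst P) \<times> supp2 (fst Q). mode_shift (fst p) = a \<and> mode_shift (snd p) = b}.
       h (case_prod (fst P) (fst p)) (case_prod (fst Q) (snd p)))"
proof -
  have "h (fst (f_map B s x P) a) (fst (f_map B s x Q) b) =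
      (\<Sum>u | u \<in> supp2 (fst P) \<and> mode_shift u = a. \<Sum>v | v \<in> supp2 (fst Q) \<and> mode_shift v = b.
         h (case_prod (fst P) u) (case_prod (fst Q) v))"
    unfolding f_map_fst_fibres[OF P] f_map_fst_fibres[OF Q] module_hom.sum[OF h(1)]
    by (simp only: module_hom.sum[OF h(2)])
  also have "\<dots> = (\<Sum>p\<in>{u\<in>supp2 (fst P). mode_shift u = a} \<times> {v\<in>supp2 (fst Q). mode_shift v = b}.
         h (case_prod (fst P) (fst p)) (case_prod (fst Q) (snd p)))"
    by (simp add: sum.cartesian_product split_def)
  also have "{u\<in>supp2 (fst P). mode_shift u = a} \<times> {v\<in>supp2 (fst Q). mode_shift v = b}
      = {p\<in>supp2 (fst P) \<times> supp2 (fst Q). mode_shift (fst p) = a \<and> mode_shift (snd p) = b}"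
    by auto
  finally show ?thesis .
qed

lemma f_map_in_loop_carrier:
  assumes "P \<in> tw_carrier sc br s"
  shows "f_map B s x P \<in> loop_carrier"
proof -
  have "supp1 (fst (f_map B s x P)) = {n. fst (f_map B s x P) n \<noteq> 0}"
    by (simp add: supp1_def)
  then show ?thesis
    using finite_fibre_sum_support[OF tw_carrierD(1)[OF assms] f_map_fst_fibres[OF assms]]
    by (simp add: loop_carrier_def)
qed

lemma tw_br_fst_fibres:
  "case_prod (fst (tw_br sc br B x P Q)) w =
    (\<Sum>p\<in>{p\<in>supp2 (fst P) \<times> supp2 (fst Q). fst p + snd p = w}.
       br (case_prod (fst P) (fst p)) (case_prod (fst Q) (snd p)))"
  unfolding tw_br_def fst_conv by (cases w) (auto intro!: sum.cong)

lemma sum_tw_br_fst: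
  assumes "finite (supp2 (fst P))" "finite (supp2 (fst Q))"
  shows "(\<Sum>w\<in>{w\<in>supp2 (fst (tw_br sc br B x P Q)). C w}. case_prod (fst (tw_br sc br B x P Q)) w) =
    (\<Sum>p\<in>{p\<in>supp2 (fst P) \<times> supp2 (fst Q). C (fst p + snd p)}.
       br (case_prod (fst P) (fst p)) (case_prod (fst Q) (snd p)))"
proof (rule sum_fibres[OF _ _ tw_br_fst_fibres])
  have "supp2 (fst (tw_br sc br B x P Q)) = {w. case_prod (fst (tw_br sc br B x P Q)) w \<noteq> 0}"
    by (auto simp: supp2_def)
  then show "finite (supp2 (fst (tw_br sc br B x P Q)))"
    using finite_fibre_sum_support[OF _ tw_br_fst_fibres[where sc = sc and br = br and B = B and x = x]]
      assms by simp
qed (use assms in \<open>auto simp: supp2_def\<close>)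

lemma tw_br_snd:
  "snd (tw_br sc br B x P Q) =
    (\<Sum>p\<in>{p\<in>supp2 (fst P) \<times> supp2 (fst Q). snd (fst p) = - snd (snd p)}.
       B (br x (case_prod (fst P) (fst p)) + sc (snd (fst p)) (case_prod (fst P) (fst p)))
         (case_prod (fst Q) (snd p)))"
  unfolding tw_br_def snd_conv by (auto intro!: sum.cong)

definition tw_lift :: "('g \<Rightarrow> complex \<Rightarrow> 'g::zero) \<Rightarrow> (int \<Rightarrow> 'g) \<Rightarrow> complex \<Rightarrow> complex \<Rightarrow> 'g" where
  "tw_lift dec \<phi> r m = (if m - r \<in> \<int> then dec (\<phi> (mode_shift (r, m))) r else 0)"

lemma finite_supp2_tw_lift:
  assumes "finite (supp1 \<phi>)" "\<And>v. finite {r. dec v r \<noteq> 0}" "\<And>r. dec 0 r = 0"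
  shows "finite (supp2 (tw_lift dec \<phi>))"
proof -
  have "supp2 (tw_lift dec \<phi>) \<subseteq> (\<lambda>(n, r). (r, r + of_int n)) ` (SIGMA n:supp1 \<phi>. {r. dec (\<phi> n) r \<noteq> 0})"
  proof
    fix u assume "u \<in> supp2 (tw_lift dec \<phi>)"
    then obtain r m where u: "u = (r, m)" and "m - r \<in> \<int>" and dec_nz: "dec (\<phi> (mode_shift (r, m))) r \<noteq> 0"
      by (auto simp: supp2_def tw_lift_def split: if_splits)
    then have "u = (r, r + of_int (mode_shift (r, m)))"
      using complex_Ints_eq_floor_Re[of "m - r"] by (simp add: mode_shift_def algebra_simps)
    moreover have "\<phi> (mode_shift (r, m)) \<noteq> 0"
      using dec_nz assms(3) by metis
    ultimately show "u \<in> (\<lambda>(n, r). (r, r + of_int n)) ` (SIGMA n:supp1 \<phi>. {r. dec (\<phi> n) r \<noteq> 0})"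
      using dec_nz by (force simp: supp1_def)
  qed
  then show ?thesis
    by (rule finite_subset) (use assms(1,2) in simp)
qed

section \<open>Eigenspaces of \<open>ad s\<close> and invariant forms\<close>

locale lie_alg =
  fixes sc :: "complex \<Rightarrow> 'g::ab_group_add \<Rightarrow> 'g" and br :: "'g \<Rightarrow> 'g \<Rightarrow> 'g"
  assumes lie: "lie_algebra sc br"
begin

sublocale V: vector_space sc
  using lie by (simp add: lie_algebra_def)

lemma br_hom_right: "module_hom sc sc (br a)"
  using lie by (simp add: lie_algebra_def module_hom_iff_linear)

lemma br_hom_left: "module_hom sc sc (\<lambda>a. br a b)"
  using lie by (simp add: lie_algebra_def module_hom_iff_linear)

lemma br_self: "br a a = 0"
  using lie by (simp add: lie_algebra_def)

lemma jacobi: "br a (br b c) + br b (br c a) + br c (br a b) = 0"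
  using lie by (simp add: lie_algebra_def)

lemmas br_add_right = module_hom.add[OF br_hom_right]
  and br_scale_right = module_hom.scale[OF br_hom_right]
  and br_zero_right[simp] = module_hom.zero[OF br_hom_right]
  and br_neg_right = module_hom.neg[OF br_hom_right]
  and br_sum_right = module_hom.sum[OF br_hom_right]
  and br_add_left = module_hom.add[OF br_hom_left]
  and br_zero_left[simp] = module_hom.zero[OF br_hom_left]

lemma br_anticomm: "br a b = - br b a"
proof -
  have "br a b + br b a = br (a + b) (a + b)"
    by (simp add: br_add_left br_add_right br_self[of a] br_self[of b])
  also have "\<dots> = 0"
    by (rule br_self)
  finally show ?thesis by (simp add: eq_neg_iff_add_eq_0)
qed

lemma subspace_eigsp: "V.subspace (eigsp sc br s r)"
  by (rule V.subspaceI)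
    (simp_all add: eigsp_def br_add_right br_scale_right V.scale_right_distrib V.scale_left_commute)

lemma eigsp_br_commuting:
  assumes "br s x = 0" and "a \<in> eigsp sc br s r"
  shows "br x a \<in> eigsp sc br s r"
proof -
  have "br s (br x a) + br x (br a s) + br a (br s x) = 0"
    by (rule jacobi)
  moreover have "br a s = - sc r a"
    using assms(2) by (simp add: eigsp_def br_anticomm[of a s])
  ultimately show ?thesis
    using assms(1) by (simp add: eigsp_def br_neg_right br_scale_right add_eq_0_iff2)
qed

lemma eigsp_sum_eq_0D:
  assumes "finite F" "\<And>r. r \<in> F \<Longrightarrow> v r \<in> eigsp sc br s r" "(\<Sum>r\<in>F. v r) = 0" "r \<in> F"
  shows "v r = 0"
  using assms
proof (induction F arbitrary: v r rule: finite_induct)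
  case empty
  then show ?case by simp
next
  case (insert r0 F)
  have sum_0: "v r0 + (\<Sum>r\<in>F. v r) = 0"
    using insert by simp
  have "0 = br s (v r0 + (\<Sum>r\<in>F. v r)) - sc r0 (v r0 + (\<Sum>r\<in>F. v r))"
    by (simp add: sum_0)
  also have "\<dots> = (\<Sum>r\<in>F. sc (r - r0) (v r))"
    using insert.prems(1)
    by (simp add: br_add_right br_sum_right eigsp_def V.scale_right_distrib V.scale_sum_right
        V.scale_left_diff_distrib sum_subtractf)
  finally have "(\<Sum>r\<in>F. sc (r - r0) (v r)) = 0" ..
  then have "sc (r - r0) (v r) = 0" if "r \<in> F" for r
    using insert.IH[of "\<lambda>r. sc (r - r0) (v r)"] insert.prems(1) that
    by (auto intro: V.subspace_scale[OF subspace_eigsp])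
  then have "v r = 0" if "r \<in> F" for r
    using that insert.hyps(2) by fastforce
  moreover from this have "v r0 = 0"
    using sum_0 by simp
  ultimately show ?case
    using insert.prems(3) by auto
qed

lemma eigsp_decomposition:
  assumes "ad_semisimple sc br s"
  shows "\<exists>c. finite {r. c r \<noteq> 0} \<and> (\<forall>r. c r \<in> eigsp sc br s r) \<and> v = (\<Sum>r | c r \<noteq> 0. c r)"
proof -
  have "v \<in> V.span (\<Union>r. eigsp sc br s r)"
    using assms by (simp add: ad_semisimple_def)
  then obtain t coef where t: "finite t" "t \<subseteq> (\<Union>r. eigsp sc br s r)"
    and v: "v = (\<Sum>a\<in>t. sc (coef a) a)"
    unfolding V.span_explicit by blast
  define ev where "ev a = (SOME r. a \<in> eigsp sc br s r)" for a
  have ev: "a \<in> eigsp sc br s (ev a)" if "a \<in> t" for a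
    using t(2) that unfolding ev_def by (metis UN_iff someI_ex subsetD)
  define c where "c r = (\<Sum>a | a \<in> t \<and> ev a = r. sc (coef a) a)" for r
  have c_eigsp: "c r \<in> eigsp sc br s r" for r
    unfolding c_def
    by (rule V.subspace_sum[OF subspace_eigsp]) (auto intro: V.subspace_scale[OF subspace_eigsp] ev)
  have supp: "{r. c r \<noteq> 0} \<subseteq> ev ` t"
    by (force simp: c_def intro: sum.neutral)
  have "v = (\<Sum>r\<in>ev ` t. c r)"
    unfolding v c_def by (rule sum.group[symmetric]) (use t(1) in auto)
  also have "\<dots> = (\<Sum>r | c r \<noteq> 0. c r)"
    by (rule sum.mono_neutral_right) (use t(1) supp in auto)
  finally show ?thesis
    using c_eigsp finite_subset[OF supp] t(1) by blast
qed


lemma eigsp_component_choice: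
  assumes "ad_semisimple sc br s"
  obtains dec where "\<And>v. finite {r. dec v r \<noteq> 0}" "\<And>v r. dec v r \<in> eigsp sc br s r"
    "\<And>v. v = (\<Sum>r | dec v r \<noteq> 0. dec v r)" "\<And>r. dec 0 r = 0"
proof -
  obtain dec where "\<forall>v. finite {r. dec v r \<noteq> 0} \<and> (\<forall>r. dec v r \<in> eigsp sc br s r)
      \<and> v = (\<Sum>r | dec v r \<noteq> 0. dec v r)"
    using eigsp_decomposition[OF assms] by metis
  then have dec: "\<And>v. finite {r. dec v r \<noteq> 0}" "\<And>v r. dec v r \<in> eigsp sc br s r"
    "\<And>v. v = (\<Sum>r | dec v r \<noteq> 0. dec v r)"
    by blast+
  moreover have "dec 0 r = 0" for r
  proof (rule ccontr)
    assume "dec 0 r \<noteq> 0"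
    then show False
      using eigsp_sum_eq_0D[of "{r. dec 0 r \<noteq> 0}" "dec 0"] dec(1,2) dec(3)[of 0, symmetric] by blast
  qed
  ultimately show ?thesis
    by (rule that)
qed
end

locale lie_alg_form = lie_alg sc br
  for sc :: "complex \<Rightarrow> 'g::ab_group_add \<Rightarrow> 'g" and br :: "'g \<Rightarrow> 'g \<Rightarrow> 'g" +
  fixes B :: "'g \<Rightarrow> 'g \<Rightarrow> complex"
  assumes B_linear: "Vector_Spaces.linear sc (*) (B a)"
    and B_sym: "B a b = B b a"
    and B_invariant: "B (br a b) c = B a (br b c)"
begin

lemma B_hom_right: "module_hom sc (*) (B a)"
  using B_linear by (simp add: module_hom_iff_linear)

lemma B_hom_left: "module_hom sc (*) (\<lambda>a. B a b)"
proof -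
  have "(\<lambda>a. B a b) = B b"
    by (simp add: fun_eq_iff B_sym)
  then show ?thesis
    using B_hom_right by simp
qed

lemmas B_add_right = module_hom.add[OF B_hom_right]
  and B_scale_right = module_hom.scale[OF B_hom_right]
  and B_zero_right[simp] = module_hom.zero[OF B_hom_right]
  and B_sum_right = module_hom.sum[OF B_hom_right]
  and B_add_left = module_hom.add[OF B_hom_left]
  and B_scale_left = module_hom.scale[OF B_hom_left]
  and B_zero_left[simp] = module_hom.zero[OF B_hom_left]
  and B_neg_left = module_hom.neg[OF B_hom_left]

lemma B_eigsp_orthogonal:
  assumes "a \<in> eigsp sc br s r" "b \<in> eigsp sc br s r'" "r + r' \<noteq> 0"
  shows "B a b = 0"
proof -
  have "r' * B a b = B a (br s b)"
    using assms(2) by (simp add: eigsp_def B_scale_right)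
  also have "\<dots> = B (- br s a) b"
    by (simp add: B_invariant[symmetric] br_anticomm[of a s])
  also have "\<dots> = - (r * B a b)"
    using assms(1) by (simp add: eigsp_def B_neg_left B_scale_left)
  finally have "(r + r') * B a b = 0"
    by (simp add: distrib_right)
  then show ?thesis
    using assms(3) by simp
qed

lemma central_term_identity:
  assumes sx: "br s x = 0" and a: "a \<in> eigsp sc br s r" and b: "b \<in> eigsp sc br s r'"
    and i: "m - r = of_int i" and j: "n - r' = of_int j"
  shows "(if m = - n then B (br x a + sc m a) b else 0)
           - (if m + n = r + r' then B (s + x) (br a b) else 0)
         = (if i + j = 0 then of_int i * B a b else 0)"
proof -
  have cocycle: "B (br x a + sc m a) b = B (br x a) b + m * B a b"
    by (simp add: B_add_left B_scale_left)
  have eta: "B (s + x) (br a b) = r * B a b + B (br x a) b"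
    using a by (simp add: B_invariant[symmetric] br_add_left B_add_left B_scale_left eigsp_def)
  show ?thesis
  proof (cases "r + r' = 0")
    case True
    have "m + n = of_int (i + j)"
      using True i j by (simp add: algebra_simps)
    then have "i + j = 0 \<longleftrightarrow> m = - n" and "m + n = r + r' \<longleftrightarrow> m = - n"
      using True by (simp_all add: eq_neg_iff_add_eq_0 del: of_int_add)
    moreover have "B (br x a) b + m * B a b - (r * B a b + B (br x a) b) = of_int i * B a b"
      using i by (simp add: algebra_simps flip: left_diff_distrib)
    ultimately show ?thesis
      unfolding cocycle eta by (cases "m = - n") auto
  next
    case False
    have "B a b = 0" and "B (br x a) b = 0"
      using B_eigsp_orthogonal[OF a b False] B_eigsp_orthogonal[OF eigsp_br_commuting[OF sx a] b False] .
    then show ?thesis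
      unfolding cocycle eta by simp
  qed
qed


section \<open>The isomorphism \<open>f\<close>\<close>

lemma f_map_inj: "inj_on (f_map B s x) (tw_carrier sc br s)"
proof (rule inj_onI)
  fix P Q assume P: "P \<in> tw_carrier sc br s" and Q: "Q \<in> tw_carrier sc br s"
    and eq: "f_map B s x P = f_map B s x Q"
  define E where "E = fst ` supp2 (fst P) \<union> fst ` supp2 (fst Q)"
  have E: "finite E" "fst ` supp2 (fst P) \<subseteq> E" "fst ` supp2 (fst Q) \<subseteq> E"
    using tw_carrierD(1)[OF P] tw_carrierD(1)[OF Q] by (auto simp: E_def)
  have "fst P r m = fst Q r m" for r m
  proof (cases "m - r \<in> \<int> \<and> r \<in> E")
    case True
    then obtain n where m: "m = r + of_int n" and "r \<in> E"
      by (auto elim!: Ints_cases simp: algebra_simps)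
    have "(\<Sum>r\<in>E. fst P r (r + of_int n) - fst Q r (r + of_int n)) = 0"
      using arg_cong[OF eq, of "\<lambda>L. fst L n"]
      by (simp add: f_map_fst_diagonal[OF E(1,2)] f_map_fst_diagonal[OF E(1,3)] sum_subtractf)
    then have "fst P r (r + of_int n) - fst Q r (r + of_int n) = 0"
      by (intro eigsp_sum_eq_0D[where v = "\<lambda>r. fst P r (r + of_int n) - fst Q r (r + of_int n)"])
        (use E(1) \<open>r \<in> E\<close> in \<open>auto intro: V.subspace_diff[OF subspace_eigsp] tw_carrierD(2)[OF P] tw_carrierD(2)[OF Q]\<close>)
    then show ?thesis
      by (simp add: m)
  next
    case False
    have "fst R r m = 0" if "R \<in> {P, Q}" for R
    proof (cases "m - r \<in> \<int>")
      case True
      then have "r \<notin> fst ` supp2 (fst R)"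
        using False that by (auto simp: E_def)
      then show ?thesis
        by (force simp: supp2_def)
    qed (use tw_carrierD(3) P Q that in blast)
    then show ?thesis
      by simp
  qed
  then have fst_eq: "fst P = fst Q"
    by blast
  moreover have "snd P = snd Q"
    using arg_cong[OF eq, of snd] fst_eq
    by (simp add: f_map_snd_diagonal[OF E(1,2)] f_map_snd_diagonal[OF E(1,3)])
  ultimately show "P = Q"
    by (rule prod_eqI)
qed

lemma f_map_surj:
  assumes ss: "ad_semisimple sc br s" and L: "L \<in> loop_carrier"
  shows "L \<in> f_map B s x ` tw_carrier sc br s"
proof -
  obtain dec where dec: "\<And>v. finite {r. dec v r \<noteq> 0}" "\<And>v r. dec v r \<in> eigsp sc br s r"
    "\<And>v. v = (\<Sum>r | dec v r \<noteq> 0. dec v r)" "\<And>r. dec 0 r = 0"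
    using eigsp_component_choice[OF ss] by blast
  define \<phi> where "\<phi> = fst L"
  define \<Phi> where "\<Phi> = tw_lift dec \<phi>"
  have fin: "finite (supp2 \<Phi>)"
    unfolding \<Phi>_def
    by (rule finite_supp2_tw_lift) (use L dec in \<open>simp_all add: loop_carrier_def \<phi>_def\<close>)
  \<comment> \<open>the central coordinate compensates the shift by \<open>\<eta>\<close>\<close>
  define P where "P = (\<Phi>, snd L + (\<Sum>r\<in>fst ` supp2 \<Phi>. B (s + x) (\<Phi> r r)))"
  have "P \<in> tw_carrier sc br s"
    using fin dec(2) V.subspace_0[OF subspace_eigsp] by (auto simp: tw_carrier_def P_def \<Phi>_def tw_lift_def)
  moreover have "f_map B s x P = L"
  proof (rule prod_eqI)
    show "fst (f_map B s x P) = fst L"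
    proof
      fix n
      define E where "E = fst ` supp2 \<Phi> \<union> {r. dec (\<phi> n) r \<noteq> 0}"
      have E: "finite E" "fst ` supp2 \<Phi> \<subseteq> E"
        using fin dec(1) by (auto simp: E_def)
      have "fst (f_map B s x P) n = (\<Sum>r\<in>E. dec (\<phi> n) r)"
        using f_map_fst_diagonal[of E P] E by (simp add: P_def \<Phi>_def tw_lift_def mode_shift_def)
      also have "\<dots> = \<phi> n"
        by (subst (2) dec(3)) (rule sum.mono_neutral_right, use E in \<open>auto simp: E_def\<close>)
      finally show "fst (f_map B s x P) n = fst L n"
        by (simp add: \<phi>_def)
    qed
    show "snd (f_map B s x P) = snd L"
      using f_map_snd_diagonal[of "fst ` supp2 \<Phi>" P] fin by (simp add: P_def)
  qed
  ultimately show ?thesis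
    by blast
qed

lemma f_map_bij:
  assumes "ad_semisimple sc br s"
  shows "bij_betw (f_map B s x) (tw_carrier sc br s) loop_carrier"
  unfolding bij_betw_def using f_map_inj f_map_in_loop_carrier f_map_surj[OF assms] by blast

lemma f_map_add:
  assumes P: "P \<in> tw_carrier sc br s" and Q: "Q \<in> tw_carrier sc br s"
  shows "f_map B s x (tw_add P Q) = loop_add (f_map B s x P) (f_map B s x Q)"
proof -
  define E where "E = fst ` supp2 (fst P) \<union> fst ` supp2 (fst Q)"
  have "supp2 (fst (tw_add P Q)) \<subseteq> supp2 (fst P) \<union> supp2 (fst Q)"
    by (auto simp: supp2_def tw_add_def)
  then have E: "finite E" "fst ` supp2 (fst (tw_add P Q)) \<subseteq> E"
    "fst ` supp2 (fst P) \<subseteq> E" "fst ` supp2 (fst Q) \<subseteq> E"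
    using tw_carrierD(1)[OF P] tw_carrierD(1)[OF Q] by (auto simp: E_def)
  show ?thesis
  proof (rule prod_eqI)
    show "fst (f_map B s x (tw_add P Q)) = fst (loop_add (f_map B s x P) (f_map B s x Q))"
      by (rule ext, subst f_map_fst_diagonal[OF E(1,2)])
        (simp add: f_map_fst_diagonal[OF E(1)] E loop_add_def tw_add_def sum.distrib)
    show "snd (f_map B s x (tw_add P Q)) = snd (loop_add (f_map B s x P) (f_map B s x Q))"
      by (subst f_map_snd_diagonal[OF E(1,2)])
        (simp_all add: f_map_snd_diagonal[OF E(1)] E loop_add_def tw_add_def sum.distrib B_add_right)
  qed
qed

lemma f_map_scale:
  assumes P: "P \<in> tw_carrier sc br s"
  shows "f_map B s x (tw_scale sc z P) = loop_scale sc z (f_map B s x P)"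
proof -
  define E where "E = fst ` supp2 (fst P)"
  have "supp2 (fst (tw_scale sc z P)) \<subseteq> supp2 (fst P)"
    by (auto simp: supp2_def tw_scale_def)
  then have E: "finite E" "fst ` supp2 (fst (tw_scale sc z P)) \<subseteq> E" "fst ` supp2 (fst P) \<subseteq> E"
    using tw_carrierD(1)[OF P] by (auto simp: E_def)
  show ?thesis
  proof (rule prod_eqI)
    show "fst (f_map B s x (tw_scale sc z P)) = fst (loop_scale sc z (f_map B s x P))"
      by (rule ext, subst f_map_fst_diagonal[OF E(1,2)])
        (simp add: f_map_fst_diagonal[OF E(1)] E loop_scale_def tw_scale_def V.scale_sum_right)
    show "snd (f_map B s x (tw_scale sc z P)) = snd (loop_scale sc z (f_map B s x P))"
      by (subst f_map_snd_diagonal[OF E(1,2)])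
        (simp_all add: f_map_snd_diagonal[OF E(1)] E loop_scale_def tw_scale_def B_scale_right
          sum_distrib_left right_diff_distrib)
  qed
qed

lemma loop_br_f_map_fst:
  assumes P: "P \<in> tw_carrier sc br s" and Q: "Q \<in> tw_carrier sc br s"
  shows "fst (loop_br br B (f_map B s x P) (f_map B s x Q)) k =
    (\<Sum>(u, v)\<in>{(u, v)\<in>supp2 (fst P) \<times> supp2 (fst Q). mode_shift u + mode_shift v = k}.
       br (case_prod (fst P) u) (case_prod (fst Q) v))"
proof -
  let ?\<phi> = "fst (f_map B s x P)" and ?\<psi> = "fst (f_map B s x Q)"
  have fin: "finite (supp2 (fst P) \<times> supp2 (fst Q))" "finite (supp1 ?\<phi> \<times> supp1 ?\<psi>)"
    using tw_carrierD(1)[OF P] tw_carrierD(1)[OF Q] f_map_in_loop_carrier[OF P] f_map_in_loop_carrier[OF Q]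
    by (auto simp: loop_carrier_def)
  have fibre: "(\<lambda>(a, b). br (?\<phi> a) (?\<psi> b)) z =
      (\<Sum>p\<in>{p\<in>supp2 (fst P) \<times> supp2 (fst Q). (\<lambda>(u, v). (mode_shift u, mode_shift v)) p = z}.
         (\<lambda>(u, v). br (case_prod (fst P) u) (case_prod (fst Q) v)) p)" for z
    by (cases z) (simp add: bilinear_f_map_fst_fibres[OF br_hom_left br_hom_right P Q] split_def mem_Times_iff)
  have vanish: "(\<lambda>(a, b). br (?\<phi> a) (?\<psi> b)) z = 0" if "z \<notin> supp1 ?\<phi> \<times> supp1 ?\<psi>" for z
    using that by (cases z) (auto simp: supp1_def)
  have "fst (loop_br br B (f_map B s x P) (f_map B s x Q)) k =
      (\<Sum>z\<in>{z\<in>supp1 ?\<phi> \<times> supp1 ?\<psi>. (\<lambda>(a, b). a + b = k) z}. (\<lambda>(a, b). br (?\<phi> a) (?\<psi> b)) z)"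
    unfolding loop_br_def fst_conv by (rule sum.cong) auto
  also have "\<dots> = (\<Sum>p\<in>{p\<in>supp2 (fst P) \<times> supp2 (fst Q).
        (\<lambda>(a, b). a + b = k) ((\<lambda>(u, v). (mode_shift u, mode_shift v)) p)}.
      (\<lambda>(u, v). br (case_prod (fst P) u) (case_prod (fst Q) v)) p)"
    by (rule sum_fibres[OF fin fibre vanish])
  finally show ?thesis
    by (simp add: case_prod_beta' mem_Times_iff)
qed

lemma loop_br_f_map_snd:
  assumes P: "P \<in> tw_carrier sc br s" and Q: "Q \<in> tw_carrier sc br s"
  shows "snd (loop_br br B (f_map B s x P) (f_map B s x Q)) =
    (\<Sum>(u, v)\<in>supp2 (fst P) \<times> supp2 (fst Q).
       if mode_shift u + mode_shift v = 0
       then of_int (mode_shift u) * B (case_prod (fst P) u) (case_prod (fst Q) v) else 0)"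
proof -
  let ?\<phi> = "fst (f_map B s x P)" and ?\<psi> = "fst (f_map B s x Q)"
  let ?U = "{p\<in>supp2 (fst P) \<times> supp2 (fst Q). mode_shift (fst p) + mode_shift (snd p) = 0}"
  have fin: "finite ?U" "finite (supp1 ?\<phi>)" "finite (supp2 (fst P) \<times> supp2 (fst Q))"
    using tw_carrierD(1)[OF P] tw_carrierD(1)[OF Q] f_map_in_loop_carrier[OF P]
    by (auto simp: loop_carrier_def)
  have fibre: "of_int a * B (?\<phi> a) (?\<psi> (- a)) =
      (\<Sum>p\<in>{p\<in>?U. mode_shift (fst p) = a}.
         of_int (mode_shift (fst p)) * B (case_prod (fst P) (fst p)) (case_prod (fst Q) (snd p)))" for a
  proof -
    have "{p\<in>?U. mode_shift (fst p) = a} =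
        {p\<in>supp2 (fst P) \<times> supp2 (fst Q). mode_shift (fst p) = a \<and> mode_shift (snd p) = - a}"
      by auto
    then show ?thesis
      by (simp add: bilinear_f_map_fst_fibres[OF B_hom_left B_hom_right P Q] sum_distrib_left)
  qed
  have vanish: "of_int a * B (?\<phi> a) (?\<psi> (- a)) = 0" if "a \<notin> supp1 ?\<phi>" for a
    using that by (simp add: supp1_def)
  have "snd (loop_br br B (f_map B s x P) (f_map B s x Q)) =
      (\<Sum>a\<in>{a\<in>supp1 ?\<phi>. True}. of_int a * B (?\<phi> a) (?\<psi> (- a)))"
    by (simp add: loop_br_def)
  also have "\<dots> = (\<Sum>p\<in>{p\<in>?U. True}.
      of_int (mode_shift (fst p)) * B (case_prod (fst P) (fst p)) (case_prod (fst Q) (snd p)))"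
    by (rule sum_fibres[OF fin(1,2) fibre vanish])
  also have "\<dots> = (\<Sum>p\<in>supp2 (fst P) \<times> supp2 (fst Q). if mode_shift (fst p) + mode_shift (snd p) = 0
      then of_int (mode_shift (fst p)) * B (case_prod (fst P) (fst p)) (case_prod (fst Q) (snd p)) else 0)"
    by (subst sum.inter_filter[OF fin(3), symmetric]) simp
  finally show ?thesis
    by (simp only: split_def)
qed

lemma f_map_tw_br_fst:
  assumes P: "P \<in> tw_carrier sc br s" and Q: "Q \<in> tw_carrier sc br s"
  shows "fst (f_map B s x (tw_br sc br B x P Q)) k =
    (\<Sum>(u, v)\<in>{(u, v)\<in>supp2 (fst P) \<times> supp2 (fst Q). mode_shift u + mode_shift v = k}.
       br (case_prod (fst P) u) (case_prod (fst Q) v))"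
proof -
  let ?T = "fst (tw_br sc br B x P Q)" and ?U = "supp2 (fst P) \<times> supp2 (fst Q)"
  have "fst (f_map B s x (tw_br sc br B x P Q)) k =
      (\<Sum>w\<in>{w\<in>supp2 ?T. snd w - fst w = of_int k}. case_prod ?T w)"
    unfolding f_map_def fst_conv by (rule sum.cong) auto
  also have "\<dots> = (\<Sum>p\<in>{p\<in>?U. snd (fst p + snd p) - fst (fst p + snd p) = of_int k}.
      br (case_prod (fst P) (fst p)) (case_prod (fst Q) (snd p)))"
    by (rule sum_tw_br_fst[OF tw_carrierD(1)[OF P] tw_carrierD(1)[OF Q]])
  also have "{p\<in>?U. snd (fst p + snd p) - fst (fst p + snd p) = of_int k} =
      {p\<in>?U. mode_shift (fst p) + mode_shift (snd p) = k}"
  proof -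
    have "snd (fst p + snd p) - fst (fst p + snd p) = of_int (mode_shift (fst p) + mode_shift (snd p))"
      if "p \<in> ?U" for p
      using that mode_shift_eq[OF P, of "fst p"] mode_shift_eq[OF Q, of "snd p"]
      by (auto simp: algebra_simps mem_Times_iff)
    then show ?thesis
      by (metis (lifting) of_int_eq_iff)
  qed
  finally show ?thesis
    by (simp add: case_prod_beta' mem_Times_iff)
qed

lemma f_map_tw_br_snd:
  assumes P: "P \<in> tw_carrier sc br s" and Q: "Q \<in> tw_carrier sc br s"
  shows "snd (f_map B s x (tw_br sc br B x P Q)) =
    (\<Sum>(u, v)\<in>supp2 (fst P) \<times> supp2 (fst Q).
       (if snd u = - snd v
        then B (br x (case_prod (fst P) u) + sc (snd u) (case_prod (fst P) u)) (case_prod (fst Q) v) else 0)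
     - (if snd u + snd v = fst u + fst v
        then B (s + x) (br (case_prod (fst P) u) (case_prod (fst Q) v)) else 0))"
proof -
  let ?T = "fst (tw_br sc br B x P Q)" and ?U = "supp2 (fst P) \<times> supp2 (fst Q)"
  have fin: "finite ?U"
    using tw_carrierD(1)[OF P] tw_carrierD(1)[OF Q] by simp
  have "(\<Sum>(r, m)\<in>{(r, m). (r, m) \<in> supp2 ?T \<and> m = r}. B (s + x) (?T r m))
      = B (s + x) (\<Sum>w\<in>{w\<in>supp2 ?T. snd w = fst w}. case_prod ?T w)"
    unfolding B_sum_right by (rule sum.cong) auto
  also have "\<dots> = B (s + x) (\<Sum>p\<in>{p\<in>?U. snd (fst p + snd p) = fst (fst p + snd p)}.
      br (case_prod (fst P) (fst p)) (case_prod (fst Q) (snd p)))"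
    by (simp only: sum_tw_br_fst[OF tw_carrierD(1)[OF P] tw_carrierD(1)[OF Q]])
  also have "\<dots> = (\<Sum>p\<in>?U. if snd (fst p) + snd (snd p) = fst (fst p) + fst (snd p)
        then B (s + x) (br (case_prod (fst P) (fst p)) (case_prod (fst Q) (snd p))) else 0)"
    unfolding B_sum_right by (simp add: sum.inter_filter[OF fin])
  finally have eta: "(\<Sum>(r, m)\<in>{(r, m). (r, m) \<in> supp2 ?T \<and> m = r}. B (s + x) (?T r m)) =
      (\<Sum>p\<in>?U. if snd (fst p) + snd (snd p) = fst (fst p) + fst (snd p)
        then B (s + x) (br (case_prod (fst P) (fst p)) (case_prod (fst Q) (snd p))) else 0)" .
  show ?thesis
    unfolding f_map_def snd_conv tw_br_snd eta sum.inter_filter[OF fin] sum_subtractf[symmetric]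
    by (simp only: split_def)
qed

lemma f_map_tw_br:
  assumes sx: "br s x = 0" and P: "P \<in> tw_carrier sc br s" and Q: "Q \<in> tw_carrier sc br s"
  shows "f_map B s x (tw_br sc br B x P Q) = loop_br br B (f_map B s x P) (f_map B s x Q)"
proof (rule prod_eqI)
  show "fst (f_map B s x (tw_br sc br B x P Q)) = fst (loop_br br B (f_map B s x P) (f_map B s x Q))"
    by (rule ext) (simp only: f_map_tw_br_fst[OF P Q] loop_br_f_map_fst[OF P Q])
  have "snd (f_map B s x (tw_br sc br B x P Q)) =
      (\<Sum>(u, v)\<in>supp2 (fst P) \<times> supp2 (fst Q).
         if mode_shift u + mode_shift v = 0
         then of_int (mode_shift u) * B (case_prod (fst P) u) (case_prod (fst Q) v) else 0)"
  proof -
    have pointwise: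
      "(if m = - n then B (br x (fst P r m) + sc m (fst P r m)) (fst Q r' n) else 0)
        - (if m + n = r + r' then B (s + x) (br (fst P r m) (fst Q r' n)) else 0)
       = (if mode_shift (r, m) + mode_shift (r', n) = 0
          then of_int (mode_shift (r, m)) * B (fst P r m) (fst Q r' n) else 0)"
      if "(r, m) \<in> supp2 (fst P)" "(r', n) \<in> supp2 (fst Q)" for r m r' n
      using central_term_identity[OF sx tw_carrierD(2)[OF P] tw_carrierD(2)[OF Q]]
        mode_shift_eq[OF P that(1)] mode_shift_eq[OF Q that(2)] by simp
    show ?thesis
      unfolding f_map_tw_br_snd[OF P Q]
      by (rule sum.cong[OF refl]) (clarify, simp only: case_prod_conv fst_conv snd_conv, rule pointwise)
  qed
  also have "\<dots> = snd (loop_br br B (f_map B s x P) (f_map B s x Q))"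
    by (simp only: loop_br_f_map_snd[OF P Q])
  finally show "snd (f_map B s x (tw_br sc br B x P Q)) = snd (loop_br br B (f_map B s x P) (f_map B s x Q))" .
qed

end

theorem lemma2p1:
  fixes sc :: "complex \<Rightarrow> 'g::ab_group_add \<Rightarrow> 'g"
    and br :: "'g \<Rightarrow> 'g \<Rightarrow> 'g"
    and B :: "'g \<Rightarrow> 'g \<Rightarrow> complex"
    and s x :: 'g
  assumes "simple_lie_algebra sc br"
    and "invariant_form sc br B"
    and "ad_semisimple sc br s"
    and "ad_nilpotent br x"
    and "br s x = 0"
  shows "lie_iso sc br B s x (f_map B s x)"
proof -
  have "lie_alg_form sc br B"
    using assms(1,2)
    unfolding lie_alg_form_def lie_alg_def lie_alg_form_axioms_def simple_lie_algebra_def invariant_form_def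
    by blast
  then interpret lie_alg_form sc br B .
  show ?thesis
    unfolding lie_iso_def
    using f_map_bij[OF assms(3)] f_map_add f_map_scale f_map_tw_br[OF assms(5)] by blast
qed

end
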